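(* There is an absolute constant $C$ such that for every odd prime $p$ and every integer $n\ge2$, if $D$ and $X$ are independent and uniform on $\{0,1\}^{n-1}$ and $S=\sum_{i=1}^{n-1}X_i(-1)^{h(D)_i}$, then $$\mathbb{E}\big[q_p(S)\big]\le\tfrac12-\tfrac1\pi+\tfrac1{2p}+Cp^{3/2}e^{-n/(4p^2)},$$ where for an integer $k$, $q_p(k)=\sin^2(-\tfrac\pi4+\tfrac\pi pk)$ if $(k\bmod p)<p/2$ and $q_p(k)=\cos^2(-\tfrac\pi4+\tfrac\pi pk)$ otherwise.
   Context: $k\bmod p\in\{0,\dots,p-1\}$. Binary tree $B_n$: vertices $v_0,\dots,v_{n-1}$, root $v_0$; for $i\ge1$ the parent of $v_i$ is $v_{\lfloor(i-1)/2\rfloor}$ and $e_i$ joins $v_i$ to its parent. For $d\in\{0,1\}^{n-1}$, $h(d)_i=\bigoplus_{j:\,e_j\text{ on the path from }v_0\text{ to }v_i}d_j$. *)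

theory Defs
  imports "HOL-Analysis.Analysis" "HOL-Computational_Algebra.Primes"
begin

text \<open>Binary tree B_n: parent of v_i (i >= 1) is v_((i-1) div 2); edge e_i joins v_i to its parent.
  path_edges i = set of indices j such that e_j lies on the path from v_0 to v_i.\<close>
fun path_edges :: "nat \<Rightarrow> nat set" where
  "path_edges i = (if i = 0 then {} else insert i (path_edges ((i - 1) div 2)))"

definition hlab :: "(nat \<Rightarrow> nat) \<Rightarrow> nat \<Rightarrow> nat" where
  "hlab d i = (\<Sum>j\<in>path_edges i. d j) mod 2"

definition cube :: "nat \<Rightarrow> (nat \<Rightarrow> nat) set" where
  "cube n = PiE {1..n-1} (\<lambda>_. {0,1})"

definition Ssum :: "nat \<Rightarrow> (nat \<Rightarrow> nat) \<Rightarrow> (nat \<Rightarrow> nat) \<Rightarrow> int" where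
  "Ssum n d x = (\<Sum>i=1..n-1. int (x i) * (-1) ^ hlab d i)"

definition qp :: "nat \<Rightarrow> int \<Rightarrow> real" where
  "qp p k = (if real_of_int (k mod int p) < real p / 2
             then (sin (- pi/4 + pi / real p * real_of_int k))\<^sup>2
             else (cos (- pi/4 + pi / real p * real_of_int k))\<^sup>2)"

definition EqS :: "nat \<Rightarrow> nat \<Rightarrow> real" where
  "EqS p n = (\<Sum>d\<in>cube n. \<Sum>x\<in>cube n. qp p (Ssum n d x)) / real (card (cube n) * card (cube n))"

end

theory Submission
  imports Defs
begin

(* Revealing the last coordinate of D and of X together shows that S is a lazy simple random
   walk: the new label bit flips the sign of the new step whatever the earlier bits are, so each
   step is 0, 0, +1, -1 with equal probability and E cis(\<theta> S) = ((1 + cos \<theta>)/2)^(n-1).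
   Since q_p is p-periodic, expanding it in the characters of Z/pZ writes E q_p(S) as a sum over
   t < p of ((1 + cos(2\<pi>t/p))/2)^(n-1) times a Fourier coefficient of q_p.  The trivial character
   gives the mean of q_p over the residues, which is 1/2 - cot(\<pi>/(2p))/(2p)
   \<le> 1/2 - 1/\<pi> + 1/(2p); each of the other p - 1 characters contributes at most
   ((1 + cos(2\<pi>/p))/2)^(n-1) \<le> exp(-n/(4p^2)), so C = 1 works. *)

section \<open>Trigonometric sums and characters of the cyclic group\<close>

lemma sum_swap_pairs:
  "(\<Sum>a\<in>A. \<Sum>b\<in>B. \<Sum>c\<in>C. \<Sum>d\<in>D. g a b c d) = (\<Sum>c\<in>C. \<Sum>d\<in>D. \<Sum>a\<in>A. \<Sum>b\<in>B. g a b c d)"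
proof -
  have "(\<Sum>a\<in>A. \<Sum>b\<in>B. \<Sum>c\<in>C. \<Sum>d\<in>D. g a b c d) = (\<Sum>a\<in>A. \<Sum>c\<in>C. \<Sum>b\<in>B. \<Sum>d\<in>D. g a b c d)"
    by (intro sum.cong refl sum.swap)
  also have "\<dots> = (\<Sum>c\<in>C. \<Sum>a\<in>A. \<Sum>d\<in>D. \<Sum>b\<in>B. g a b c d)"
    by (subst sum.swap) (intro sum.cong refl sum.swap)
  also have "\<dots> = (\<Sum>c\<in>C. \<Sum>d\<in>D. \<Sum>a\<in>A. \<Sum>b\<in>B. g a b c d)"
    by (intro sum.cong refl sum.swap)
  finally show ?thesis .
qed

lemma sum_sin_telescope:
  "2 * sin h * (\<Sum>r\<le>k. sin (2 * real r * h)) = cos h - cos ((2 * real k + 1) * h)"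
proof (induction k)
  case 0
  then show ?case by simp
next
  case (Suc k)
  have "(2 * real k + 1) * h = 2 * real (Suc k) * h - h"
    and "(2 * real (Suc k) + 1) * h = 2 * real (Suc k) * h + h"
    by (simp_all add: algebra_simps)
  then have "2 * sin h * sin (2 * real (Suc k) * h)
      = cos ((2 * real k + 1) * h) - cos ((2 * real (Suc k) + 1) * h)"
    by (simp add: cos_diff cos_add)
  with Suc.IH show ?case by (simp add: distrib_left)
qed

lemma cos_ge_quadratic: "1 - x\<^sup>2 / 2 \<le> cos x" for x :: real
proof -
  have "(sin (x / 2))\<^sup>2 \<le> (x / 2)\<^sup>2"
    using abs_sin_x_le_abs_x[of "x / 2"] by (metis abs_ge_zero power2_abs power_mono)
  then show ?thesis
    using cos_double_sin[of "x / 2"] by (simp add: power_divide)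
qed

lemma sin_ge_cubic:
  fixes x :: real
  assumes "0 \<le> x"
  shows "x - x ^ 3 / 6 \<le> sin x"
proof -
  have "\<bar>sin x - (\<Sum>m<3. sin_coeff m * x ^ m)\<bar> \<le> inverse (fact 3) * \<bar>x\<bar> ^ 3"
    by (rule Maclaurin_sin_bound)
  moreover have "(\<Sum>m<3. sin_coeff m * x ^ m) = x"
    by (simp add: numeral_3_eq_3 sin_coeff_def)
  ultimately show ?thesis
    using assms by (simp add: fact_numeral abs_if split: if_splits)
qed

lemma one_plus_cos_half_nonneg: "0 \<le> (1 + cos x) / 2" for x :: real
  using cos_double_cos[of "x / 2"] by simp

lemma cos_le_cos_2pi_div:
  assumes "1 \<le> t" "t < p"
  shows "cos (2 * pi * real t / real p) \<le> cos (2 * pi / real p)"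
proof -
  define s where "s = min t (p - t)"
  have "cos (2 * pi * real t / real p) = cos (2 * pi * real s / real p)"
  proof (cases "t \<le> p - t")
    case False
    then have "2 * pi * real s / real p = 2 * pi - 2 * pi * real t / real p"
      using assms by (simp add: s_def of_nat_diff field_simps)
    then show ?thesis by simp
  qed (simp add: s_def)
  also have "\<dots> \<le> cos (2 * pi / real p)"
  proof (rule cos_monotone_0_pi_le)
    have "1 \<le> s" "2 * s \<le> p"
      using assms by (auto simp: s_def)
    then show "2 * pi / real p \<le> 2 * pi * real s / real p"
      and "2 * pi * real s / real p \<le> pi"
      by (simp_all add: divide_right_mono field_simps)
  qed simp
  finally show ?thesis .
qed

lemma sum_cis_multiples:
  assumes "p > 0"
  shows "(\<Sum>t<p. cis (2 * pi * real t / real p * of_int m)) = (if int p dvd m then of_nat p else 0)"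
proof -
  define w where "w = cis (2 * pi / real p * of_int m)"
  have powers: "cis (2 * pi * real t / real p * of_int m) = w ^ t" for t
    by (simp add: w_def Complex.DeMoivre mult_ac)
  have "w = 1 \<longleftrightarrow> int p dvd m"
  proof
    assume "w = 1"
    then obtain k :: int where "2 * pi / real p * of_int m = of_int k * 2 * pi"
      by (auto simp: w_def complex_eq_iff cos_one_2pi_int)
    then have "of_int m = (of_int (k * int p) :: real)"
      using assms by (simp add: field_simps)
    then show "int p dvd m" by (simp only: of_int_eq_iff) simp
  next
    assume "int p dvd m"
    then obtain k where "m = int p * k" by (auto simp: dvd_def)
    then have "2 * pi / real p * of_int m = 2 * pi * of_int k"
      using assms by simp
    then show "w = 1" by (simp add: w_def complex_eq_iff)
  qed
  moreover have "w ^ p = 1"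
  proof -
    have "real p * (2 * pi / real p * of_int m) = 2 * pi * of_int m"
      using assms by simp
    then show ?thesis by (simp add: w_def Complex.DeMoivre complex_eq_iff)
  qed
  ultimately have "(\<Sum>t<p. w ^ t) = (if int p dvd m then of_nat p else 0)"
    by (auto simp: geometric_sum)
  then show ?thesis
    by (simp only: powers)
qed

lemma periodic_fourier_expansion:
  fixes f :: "int \<Rightarrow> real"
  assumes "p > 0" and periodic: "\<And>k. f k = f (k mod int p)"
  shows "of_real (f k) = (\<Sum>r<p. \<Sum>t<p. of_real (f (int r)) * cis (- (2 * pi * real t / real p * real r))
                                         * cis (2 * pi * real t / real p * of_int k)) / of_nat p"
proof -
  define r0 where "r0 = nat (k mod int p)"
  have "r0 < p" and r0: "int r0 = k mod int p"
    using assms by (simp_all add: r0_def nat_less_iff)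
  have "(\<Sum>t<p. cis (- (2 * pi * real t / real p * real r)) * cis (2 * pi * real t / real p * of_int k))
      = (if r = r0 then of_nat p else 0)" if "r < p" for r
  proof -
    have "int p dvd k - int r \<longleftrightarrow> r = r0"
      using that r0 by (auto simp: mod_eq_dvd_iff[symmetric])
    moreover have "cis (- (2 * pi * real t / real p * real r)) * cis (2 * pi * real t / real p * of_int k)
        = cis (2 * pi * real t / real p * of_int (k - int r))" for t
      by (simp add: cis_mult right_diff_distrib)
    ultimately show ?thesis
      using sum_cis_multiples[OF \<open>p > 0\<close>, of "k - int r"] by simp
  qed
  then have "(\<Sum>r<p. \<Sum>t<p. of_real (f (int r)) * cis (- (2 * pi * real t / real p * real r))
                                * cis (2 * pi * real t / real p * of_int k))
      = (\<Sum>r<p. if r = r0 then of_real (f (int r0)) * of_nat p else 0)"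
    by (intro sum.cong refl) (simp add: mult.assoc sum_distrib_left[symmetric])
  also have "\<dots> = of_real (f k) * of_nat p"
    using \<open>r0 < p\<close> r0 periodic[of k] by simp
  finally show ?thesis using assms by simp
qed

section \<open>The random walk on the binary tree\<close>

declare path_edges.simps [simp del]

lemma path_edges_insert: "i \<ge> 1 \<Longrightarrow> path_edges i = insert i (path_edges ((i - 1) div 2))"
  by (subst path_edges.simps) simp

lemma path_edges_subset: "path_edges i \<subseteq> {1..i}"
proof (induction i rule: less_induct)
  case (less i)
  show ?case
  proof (cases "i = 0")
    case True
    then show ?thesis by (subst path_edges.simps) simp
  next
    case False
    then have "path_edges ((i - 1) div 2) \<subseteq> {1..i}"
      using less[of "(i - 1) div 2"] by fastforce
    with False show ?thesis by (simp add: path_edges_insert)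
  qed
qed

lemma finite_path_edges: "finite (path_edges i)"
  using path_edges_subset by (rule finite_subset) simp

lemma hlab_fun_upd_less: "i < m \<Longrightarrow> hlab (d(m := a)) i = hlab d i"
  unfolding hlab_def using path_edges_subset[of i] by (intro arg_cong[where f="\<lambda>s. s mod 2"] sum.cong) auto

lemma hlab_fun_upd_self:
  assumes "m \<ge> 1"
  shows "hlab (d(m := a)) m = (a + (\<Sum>j\<in>path_edges ((m - 1) div 2). d j)) mod 2"
proof -
  have "m \<notin> path_edges ((m - 1) div 2)"
    using path_edges_subset[of "(m - 1) div 2"] assms by auto
  then have "(\<Sum>j\<in>path_edges ((m - 1) div 2). (d(m := a)) j) = (\<Sum>j\<in>path_edges ((m - 1) div 2). d j)"
    by (intro sum.cong) auto
  with \<open>m \<notin> _\<close> show ?thesis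
    using assms by (simp add: hlab_def path_edges_insert finite_path_edges)
qed

lemma card_cube: "card (cube n) = 2 ^ (n - 1)"
  unfolding cube_def by (simp add: card_PiE numeral_2_eq_2)

lemma cube_1: "cube 1 = {\<lambda>_. undefined}"
  unfolding cube_def by simp

lemma sum_cube_Suc:
  assumes "n \<ge> 1"
  shows "(\<Sum>d\<in>cube (Suc n). g d) = (\<Sum>a\<in>{0,1}. \<Sum>d\<in>cube n. g (d(n := a)))"
proof -
  have "{1..Suc n - 1} = insert n {1..n - 1}" using assms by auto
  then have "cube (Suc n) = (\<lambda>(a, d). d(n := a)) ` ({0,1} \<times> cube n)"
    by (simp add: cube_def PiE_insert_eq)
  moreover have "inj_on (\<lambda>(a, d). d(n := a)) ({0,1} \<times> cube n)"
    unfolding cube_def by (rule inj_combinator) force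
  ultimately show ?thesis
    by (simp add: sum.reindex sum.cartesian_product prod.case_distrib)
qed

lemma sum_cube_Suc_pair:
  assumes "n \<ge> 1"
  shows "(\<Sum>d\<in>cube (Suc n). \<Sum>x\<in>cube (Suc n). g d x)
       = (\<Sum>d\<in>cube n. \<Sum>x\<in>cube n. \<Sum>a\<in>{0,1}. \<Sum>b\<in>{0,1}. g (d(n := a)) (x(n := b)))"
proof -
  have "(\<Sum>d\<in>cube (Suc n). \<Sum>x\<in>cube (Suc n). g d x)
      = (\<Sum>a\<in>{0,1}. \<Sum>d\<in>cube n. \<Sum>b\<in>{0,1}. \<Sum>x\<in>cube n. g (d(n := a)) (x(n := b)))"
    using assms by (simp add: sum_cube_Suc)
  also have "\<dots> = (\<Sum>d\<in>cube n. \<Sum>a\<in>{0,1}. \<Sum>x\<in>cube n. \<Sum>b\<in>{0,1}. g (d(n := a)) (x(n := b)))"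
    by (subst sum.swap) (intro sum.cong refl sum.swap)
  also have "\<dots> = (\<Sum>d\<in>cube n. \<Sum>x\<in>cube n. \<Sum>a\<in>{0,1}. \<Sum>b\<in>{0,1}. g (d(n := a)) (x(n := b)))"
    by (intro sum.cong refl sum.swap)
  finally show ?thesis .
qed

lemma Ssum_fun_upd:
  assumes "n \<ge> 1"
  shows "Ssum (Suc n) (d(n := a)) (x(n := b)) =
     Ssum n d x + int b * (-1) ^ ((a + (\<Sum>j\<in>path_edges ((n - 1) div 2). d j)) mod 2)"
proof -
  have "{1..Suc n - 1} = insert n {1..n - 1}" using assms by auto
  moreover have "(\<Sum>i=1..n - 1. int ((x(n := b)) i) * (-1) ^ hlab (d(n := a)) i) = Ssum n d x"
    unfolding Ssum_def by (intro sum.cong) (auto simp: hlab_fun_upd_less)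
  ultimately show ?thesis
    using assms by (simp add: Ssum_def hlab_fun_upd_self add.commute)
qed

lemma sum_lazy_step:
  fixes f :: "int \<Rightarrow> 'a::comm_semiring_1"
  shows "(\<Sum>a\<in>{0::nat,1}. \<Sum>b\<in>{0::nat,1}. f (s + int b * (-1) ^ ((a + c) mod 2)))
       = 2 * f s + f (s + 1) + f (s - 1)"
proof (cases "even c")
  case True
  then have "(1 + c) mod 2 = 1" "c mod 2 = 0" by presburger+
  then show ?thesis by (simp add: algebra_simps mult_2_right)
next
  case False
  then have "(1 + c) mod 2 = 0" "c mod 2 = 1" by presburger+
  then show ?thesis by (simp add: algebra_simps mult_2_right)
qed

lemma sum_Ssum_Suc:
  fixes f :: "int \<Rightarrow> 'a::comm_semiring_1"
  assumes "n \<ge> 1"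
  shows "(\<Sum>d\<in>cube (Suc n). \<Sum>x\<in>cube (Suc n). f (Ssum (Suc n) d x)) =
         (\<Sum>d\<in>cube n. \<Sum>x\<in>cube n. 2 * f (Ssum n d x) + f (Ssum n d x + 1) + f (Ssum n d x - 1))"
  using assms by (simp only: sum_cube_Suc_pair Ssum_fun_upd sum_lazy_step)

lemma sum_cube_cis_Ssum:
  assumes "n \<ge> 1"
  shows "(\<Sum>d\<in>cube n. \<Sum>x\<in>cube n. cis (\<theta> * of_int (Ssum n d x))) = of_real ((2 + 2 * cos \<theta>) ^ (n - 1))"
  using assms
proof (induction n rule: dec_induct)
  case base
  show ?case by (simp add: cube_1 card_cube Ssum_def)
next
  case (step m)
  have eigen: "2 * cis (\<theta> * of_int s) + cis (\<theta> * of_int (s + 1)) + cis (\<theta> * of_int (s - 1))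
      = of_real (2 + 2 * cos \<theta>) * cis (\<theta> * of_int s)" for s :: int
    by (simp add: complex_eq_iff distrib_left right_diff_distrib cos_add cos_diff sin_add sin_diff algebra_simps)
  have "(\<Sum>d\<in>cube (Suc m). \<Sum>x\<in>cube (Suc m). cis (\<theta> * of_int (Ssum (Suc m) d x)))
      = of_real (2 + 2 * cos \<theta>) * (\<Sum>d\<in>cube m. \<Sum>x\<in>cube m. cis (\<theta> * of_int (Ssum m d x)))"
    using step.hyps(1) by (simp only: sum_Ssum_Suc[where f = "\<lambda>k. cis (\<theta> * of_int k)"] eigen sum_distrib_left)
  with step.IH step.hyps(1) show ?case
    by (simp add: power_eq_if)
qed

lemma sum_cube_periodic:
  fixes f :: "int \<Rightarrow> real"
  assumes "p > 0" "n \<ge> 1" and periodic: "\<And>k. f k = f (k mod int p)"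
  shows "(\<Sum>d\<in>cube n. \<Sum>x\<in>cube n. f (Ssum n d x)) =
    (\<Sum>r<p. \<Sum>t<p. f (int r) * cos (2 * pi * real t / real p * real r)
                     * (2 + 2 * cos (2 * pi * real t / real p)) ^ (n - 1)) / real p"
proof -
  define \<theta> where "\<theta> t = 2 * pi * real t / real p" for t
  have expand: "of_real (f k) = (\<Sum>r<p. \<Sum>t<p.
      of_real (f (int r)) * cis (- (\<theta> t * real r)) * cis (\<theta> t * of_int k)) / of_nat p" for k
    unfolding \<theta>_def by (rule periodic_fourier_expansion[of p f, OF \<open>p > 0\<close> periodic])
  have "complex_of_real (\<Sum>d\<in>cube n. \<Sum>x\<in>cube n. f (Ssum n d x))
      = (\<Sum>d\<in>cube n. \<Sum>x\<in>cube n. (\<Sum>r<p. \<Sum>t<p.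
          of_real (f (int r)) * cis (- (\<theta> t * real r)) * cis (\<theta> t * of_int (Ssum n d x))) / of_nat p)"
    unfolding of_real_sum by (intro sum.cong refl expand)
  also have "\<dots> = (\<Sum>r<p. \<Sum>t<p. of_real (f (int r)) * cis (- (\<theta> t * real r))
           * (\<Sum>d\<in>cube n. \<Sum>x\<in>cube n. cis (\<theta> t * of_int (Ssum n d x)))) / of_nat p"
    by (simp only: sum_divide_distrib[symmetric] sum_swap_pairs[of _ "cube n"] sum_distrib_left)
  also have "\<dots> = (\<Sum>r<p. \<Sum>t<p. of_real (f (int r)) * cis (- (\<theta> t * real r))
           * of_real ((2 + 2 * cos (\<theta> t)) ^ (n - 1))) / of_nat p"
    using \<open>n \<ge> 1\<close> by (simp only: sum_cube_cis_Ssum)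
  finally have "(\<Sum>d\<in>cube n. \<Sum>x\<in>cube n. f (Ssum n d x))
      = Re ((\<Sum>r<p. \<Sum>t<p. of_real (f (int r)) * cis (- (\<theta> t * real r))
           * of_real ((2 + 2 * cos (\<theta> t)) ^ (n - 1))) / of_nat p)"
    by (metis Re_complex_of_real)
  also have "\<dots> = (\<Sum>r<p. \<Sum>t<p. f (int r) * cos (\<theta> t * real r) * (2 + 2 * cos (\<theta> t)) ^ (n - 1)) / real p"
  proof -
    have Re_term: "Re (of_real a * cis (- x) * of_real b) = a * cos x * b" for a b x
      by simp
    show ?thesis
      by (simp only: Re_divide_of_nat Re_sum Re_term)
  qed
  finally show ?thesis
    unfolding \<theta>_def .
qed

section \<open>The expectation of q_p\<close>

lemma qp_eq_sin:
  "qp p k = (if real_of_int (k mod int p) < real p / 2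
             then (1 - sin (2 * pi * of_int k / real p)) / 2
             else (1 + sin (2 * pi * of_int k / real p)) / 2)"
proof -
  define z where "z = - pi/4 + pi / real p * real_of_int k"
  have "cos (2 * z) = sin (2 * pi * of_int k / real p)"
  proof -
    have "2 * z = 2 * pi * of_int k / real p - pi/2" by (simp add: z_def field_simps)
    then show ?thesis by (simp add: cos_diff)
  qed
  then show ?thesis
    unfolding qp_def z_def[symmetric] using cos_double_sin[of z] cos_double_cos[of z] by simp
qed

lemma qp_mod: "p > 0 \<Longrightarrow> qp p k = qp p (k mod int p)"
proof -
  assume "p > 0"
  have "real_of_int k = real p * of_int (k div int p) + of_int (k mod int p)"
    by (metis div_mult_mod_eq mult.commute of_int_add of_int_mult of_int_of_nat_eq)
  then have "2 * pi * of_int k / real p = 2 * pi * of_int (k mod int p) / real p + 2 * pi * of_int (k div int p)"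
    using \<open>p > 0\<close> by (simp add: field_simps)
  then show ?thesis
    unfolding qp_eq_sin by (simp add: sin_add)
qed

lemma qp_nonneg: "0 \<le> qp p k" and qp_le_one: "qp p k \<le> 1"
  unfolding qp_def by (auto simp: abs_square_le_1)

lemma EqS_eq_fourier:
  assumes "p > 0" "n \<ge> 1"
  shows "EqS p n = (\<Sum>r<p. \<Sum>t<p. qp p (int r) * cos (2 * pi * real t / real p * real r)
                      * ((1 + cos (2 * pi * real t / real p)) / 2) ^ (n - 1)) / real p"
proof -
  define m where "m = n - 1"
  have split_power: "(2 + 2 * c) ^ m = 4 ^ m * ((1 + c) / 2) ^ m" for c :: real
    unfolding power_mult_distrib[symmetric] by (rule arg_cong[where f = "\<lambda>x. x ^ m"]) simp
  have "real (card (cube n) * card (cube n)) = 4 ^ (n - 1)"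
    by (simp add: card_cube flip: power_mult_distrib)
  then have "EqS p n = (\<Sum>r<p. \<Sum>t<p. qp p (int r) * cos (2 * pi * real t / real p * real r)
                      * (2 + 2 * cos (2 * pi * real t / real p)) ^ (n - 1)) / real p / 4 ^ (n - 1)"
    unfolding EqS_def using qp_mod[OF \<open>p > 0\<close>] by (simp only: sum_cube_periodic[OF assms])
  then show ?thesis
    unfolding m_def[symmetric] by (simp add: split_power sum_distrib_left[symmetric] mult.left_commute)
qed

lemma sum_qp_residues:
  assumes p: "p = 2 * m + 1"
  shows "(\<Sum>r<p. qp p (int r)) = real p / 2 - (\<Sum>r\<le>m. sin (2 * pi * real r / real p))"
proof -
  define g where "g r = sin (2 * pi * real r / real p)" for r
  have low: "qp p (int r) = (1 - g r) / 2" if "r \<le> m" for r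
  proof -
    have residue: "int r mod int p = int r"
      by (rule mod_pos_pos_trivial) (use that p in auto)
    have "real r < real p / 2"
      using that p by simp
    then show ?thesis
      unfolding qp_eq_sin residue by (simp add: g_def)
  qed
  have high: "qp p (int (p - s)) = (1 - g s) / 2" if "s \<in> {1..m}" for s
  proof -
    have residue: "int (p - s) mod int p = int (p - s)"
      by (rule mod_pos_pos_trivial) (use that p in auto)
    have upper: "\<not> real (p - s) < real p / 2"
      using that p by (auto simp: of_nat_diff)
    have "qp p (int (p - s)) = (1 + sin (2 * pi * real (p - s) / real p)) / 2"
      unfolding qp_eq_sin residue using upper by simp
    also have "2 * pi * real (p - s) / real p = 2 * pi - 2 * pi * real s / real p"
      using that p by (simp add: of_nat_diff field_simps)
    finally show ?thesis by (simp add: g_def)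
  qed
  have "(\<Sum>r<p. qp p (int r)) = (\<Sum>r\<in>{..m} \<union> {m + 1..<p}. qp p (int r))"
    by (rule sum.cong) (use p in auto)
  also have "\<dots> = (\<Sum>r\<le>m. qp p (int r)) + (\<Sum>r\<in>{m + 1..<p}. qp p (int r))"
    by (rule sum.union_disjoint) auto
  also have "(\<Sum>r\<in>{m + 1..<p}. qp p (int r)) = (\<Sum>s\<in>{1..m}. qp p (int (p - s)))"
    by (rule sum.reindex_bij_witness[where i = "\<lambda>r. p - r" and j = "\<lambda>s. p - s"]) (use p in auto)
  also have "(\<Sum>r\<le>m. qp p (int r)) = real (m + 1) / 2 - (\<Sum>r\<le>m. g r) / 2"
    using low by (simp add: sum_subtractf sum_divide_distrib[symmetric] diff_divide_distrib)
  also have "(\<Sum>s\<in>{1..m}. qp p (int (p - s))) = real m / 2 - (\<Sum>r\<le>m. g r) / 2"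
  proof -
    have "(\<Sum>s\<in>{1..m}. g s) = (\<Sum>r\<le>m. g r)"
      using sum.atLeast_Suc_atMost[of 0 m g] by (simp add: g_def atLeast0AtMost)
    then show ?thesis
      using high by (simp add: sum_subtractf sum_divide_distrib[symmetric] diff_divide_distrib)
  qed
  finally show ?thesis
    using p by (simp add: g_def)
qed

lemma sum_sin_half_turn_ge:
  assumes p: "p = 2 * m + 1" and "p \<ge> 3"
  shows "real p / pi - 1 / 2 \<le> (\<Sum>r\<le>m. sin (2 * pi * real r / real p))"
proof -
  define h where "h = pi / real p"
  have "0 < h" using \<open>p \<ge> 3\<close> by (simp add: h_def)
  have "h \<le> pi / 3"
    unfolding h_def by (rule divide_left_mono) (use \<open>p \<ge> 3\<close> in auto)
  have "0 < sin h" "sin h \<le> h"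
    using \<open>0 < h\<close> \<open>h \<le> pi / 3\<close> by (auto intro!: sin_gt_zero sin_x_le_x)
  have "h / 4 \<le> 1 / 2"
    using \<open>h \<le> pi / 3\<close> pi_less_4 by simp
  then have "real p / pi - 1 / 2 \<le> 1 / h - h / 4"
    by (simp add: h_def)
  also have "\<dots> = (2 - h\<^sup>2 / 2) / (2 * h)"
    using \<open>0 < h\<close> by (simp add: field_simps power2_eq_square)
  also have "\<dots> \<le> (1 + cos h) / (2 * h)"
    using cos_ge_quadratic[of h] \<open>0 < h\<close> by (intro divide_right_mono) linarith+
  also have "\<dots> \<le> (1 + cos h) / (2 * sin h)"
    using \<open>0 < sin h\<close> \<open>sin h \<le> h\<close> cos_ge_minus_one[of h]
    by (intro divide_left_mono mult_pos_pos) linarith+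
  also have "\<dots> = (\<Sum>r\<le>m. sin (2 * real r * h))"
  proof -
    have "(2 * real m + 1) * h = pi" using p by (simp add: h_def add.commute)
    then show ?thesis
      using sum_sin_telescope[of h m] \<open>0 < sin h\<close> by (simp add: field_simps)
  qed
  also have "\<dots> = (\<Sum>r\<le>m. sin (2 * pi * real r / real p))"
    by (simp add: h_def mult_ac)
  finally show ?thesis .
qed

lemma mean_qp_le:
  assumes "odd p" "p \<ge> 3"
  shows "(\<Sum>r<p. qp p (int r)) / real p \<le> 1 / 2 - 1 / pi + 1 / (2 * real p)"
proof -
  obtain m where p: "p = 2 * m + 1"
    using \<open>odd p\<close> by (auto elim: oddE)
  have "(\<Sum>r<p. qp p (int r)) \<le> real p / 2 - real p / pi + 1 / 2"
    using sum_qp_residues[OF p] sum_sin_half_turn_ge[OF p \<open>p \<ge> 3\<close>] by simp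
  then show ?thesis
    using \<open>p \<ge> 3\<close> by (simp add: field_simps)
qed

lemma one_plus_cos_half_power_le_exp:
  assumes "p \<ge> 3" "n \<ge> 2"
  shows "((1 + cos (2 * pi / real p)) / 2) ^ (n - 1) \<le> exp (- real n / (4 * (real p)\<^sup>2))"
proof -
  define h where "h = pi / real p"
  have "0 < h" using assms by (simp add: h_def)
  have "h \<le> pi / 3"
    unfolding h_def by (rule divide_left_mono) (use assms in auto)
  then have "h \<le> 4 / 3"
    using pi_less_4 by linarith
  then have "h\<^sup>2 \<le> (4 / 3)\<^sup>2"
    using \<open>0 < h\<close> by (intro power_mono) auto
  then have "h\<^sup>2 \<le> 3"
    by (simp add: power2_eq_square)
  then have "h / 2 \<le> h - h ^ 3 / 6"
    using \<open>0 < h\<close> by (simp add: power2_eq_square power3_eq_cube field_simps)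
  then have "h / 2 \<le> sin h"
    using sin_ge_cubic[of h] \<open>0 < h\<close> by simp
  then have "h\<^sup>2 / 4 \<le> (sin h)\<^sup>2"
    using \<open>0 < h\<close> power_mono[of "h / 2" "sin h" 2] by (simp add: power_divide)
  moreover have "(1 + cos (2 * pi / real p)) / 2 = 1 - (sin h)\<^sup>2"
    using cos_double_sin[of h] by (simp add: h_def)
  ultimately have "(1 + cos (2 * pi / real p)) / 2 \<le> exp (- (h\<^sup>2 / 4))"
    using exp_ge_add_one_self[of "- (h\<^sup>2 / 4)"] by linarith
  then have "((1 + cos (2 * pi / real p)) / 2) ^ (n - 1) \<le> exp (- (h\<^sup>2 / 4)) ^ (n - 1)"
    by (rule power_mono) (rule one_plus_cos_half_nonneg)
  also have "\<dots> = exp (- (real (n - 1) * pi\<^sup>2 / (4 * (real p)\<^sup>2)))"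
    by (simp add: h_def power_divide flip: exp_of_nat_mult)
  also have "\<dots> \<le> exp (- real n / (4 * (real p)\<^sup>2))"
  proof -
    have "real n \<le> real (n - 1) * 3\<^sup>2"
      using assms by (simp add: of_nat_diff)
    also have "\<dots> \<le> real (n - 1) * pi\<^sup>2"
      using pi_gt3 by (intro mult_left_mono power_mono) auto
    finally show ?thesis
      by (simp add: divide_right_mono)
  qed
  finally show ?thesis .
qed

lemma EqS_le_mean_qp_add:
  assumes "p > 0" "n \<ge> 1"
  shows "EqS p n \<le> (\<Sum>r<p. qp p (int r)) / real p
                    + real (p - 1) * ((1 + cos (2 * pi / real p)) / 2) ^ (n - 1)"
proof -
  define F where "F r t = qp p (int r) * cos (2 * pi * real t / real p * real r)
                           * ((1 + cos (2 * pi * real t / real p)) / 2) ^ (n - 1)" for r t :: nat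
  define \<psi> where "\<psi> = ((1 + cos (2 * pi / real p)) / 2) ^ (n - 1)"
  have F_le: "F r t \<le> \<psi>" if "t \<in> {1..<p}" for r t
  proof -
    have "qp p (int r) * cos (2 * pi * real t / real p * real r) \<le> qp p (int r) * 1"
      using qp_nonneg by (intro mult_left_mono) auto
    then have "qp p (int r) * cos (2 * pi * real t / real p * real r) \<le> 1"
      using qp_le_one[of p "int r"] by linarith
    then have "F r t \<le> 1 * ((1 + cos (2 * pi * real t / real p)) / 2) ^ (n - 1)"
      unfolding F_def by (intro mult_right_mono zero_le_power one_plus_cos_half_nonneg)
    also have "\<dots> \<le> \<psi>"
      unfolding \<psi>_def mult_1 using that one_plus_cos_half_nonneg cos_le_cos_2pi_div[of t p]
      by (intro power_mono) auto
    finally show ?thesis .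
  qed
  have "(\<Sum>t<p. F r t) = qp p (int r) + (\<Sum>t\<in>{1..<p}. F r t)" for r
  proof -
    have "{..<p} = insert 0 {1..<p}" using assms by auto
    then show ?thesis by (simp add: F_def)
  qed
  then have "(\<Sum>r<p. \<Sum>t<p. F r t) = (\<Sum>r<p. qp p (int r)) + (\<Sum>r<p. \<Sum>t\<in>{1..<p}. F r t)"
    by (simp add: sum.distrib)
  also have "\<dots> \<le> (\<Sum>r<p. qp p (int r)) + (\<Sum>r<p. \<Sum>t\<in>{1..<p}. \<psi>)"
    using F_le by (intro add_left_mono sum_mono) auto
  also have "\<dots> = (\<Sum>r<p. qp p (int r)) + real p * (real (p - 1) * \<psi>)"
    using assms by (simp add: of_nat_diff)
  finally have "EqS p n \<le> ((\<Sum>r<p. qp p (int r)) + real p * (real (p - 1) * \<psi>)) / real p"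
    unfolding EqS_eq_fourier[OF assms] F_def by (rule divide_right_mono) simp
  also have "\<dots> = (\<Sum>r<p. qp p (int r)) / real p + real (p - 1) * \<psi>"
    using assms by (simp add: add_divide_distrib)
  finally show ?thesis
    unfolding \<psi>_def .
qed

theorem lemma6p6:
  shows "\<exists>C::real. \<forall>(p::nat) (n::nat). prime p \<and> odd p \<and> n \<ge> 2 \<longrightarrow>
     EqS p n \<le> 1/2 - 1/pi + 1/(2 * real p)
               + C * real p powr (3/2) * exp (- real n / (4 * (real p)\<^sup>2))"
proof (intro exI[of _ 1] allI impI)
  fix p n :: nat
  assume "prime p \<and> odd p \<and> n \<ge> 2"
  then have "odd p" "n \<ge> 2" "p \<ge> 3"
    using prime_ge_2_nat[of p] by (auto simp: le_less)
  define E where "E = exp (- real n / (4 * (real p)\<^sup>2))"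
  have "real (p - 1) * ((1 + cos (2 * pi / real p)) / 2) ^ (n - 1) \<le> real p * E"
    unfolding E_def using one_plus_cos_half_power_le_exp[OF \<open>p \<ge> 3\<close> \<open>n \<ge> 2\<close>]
    by (intro mult_mono) (auto intro: zero_le_power one_plus_cos_half_nonneg)
  moreover have "real p * E \<le> 1 * real p powr (3/2) * E"
    using \<open>p \<ge> 3\<close> powr_mono[of 1 "3/2" "real p"] by (simp add: E_def)
  ultimately show "EqS p n \<le> 1/2 - 1/pi + 1/(2 * real p) + 1 * real p powr (3/2) * E"
    using EqS_le_mean_qp_add[of p n] mean_qp_le[OF \<open>odd p\<close> \<open>p \<ge> 3\<close>] \<open>n \<ge> 2\<close> \<open>p \<ge> 3\<close>
    by linarith
qed

end
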